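(* Let $X$ be a real Banach space and $D\subset X$ dense. Then $X$ has the Daugavet property if and only if for every $\varepsilon>0$ and $x,z\in D$, either $\|z\|\ge\|x\|$ or $$z\in\overline{\mathrm{co}}_{\mathbb{Q}}\big\{y\in \|x\|\operatorname{int}(B_X)\cap D: \|x-y\|>2\|x\|-\varepsilon\big\}.$$
   Context: $X$ has the Daugavet property if for every $\varepsilon>0$, $x\in S_X$ and slice $S=\{y\in B_X:f(y)>1-\alpha\}$ ($f\in S_{X^*}$, $\alpha>0$) there is $y\in S$ with $\|x-y\|>2-\varepsilon$. $\overline{\mathrm{co}}_{\mathbb{Q}}(A)$ is the norm closure of the set of convex combinations of elements of $A$ with rational coefficients; $\operatorname{int}(B_X)$ is the open unit ball. *)

theory Defs
  imports "HOL-Analysis.Analysis"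
begin

definition daugavet :: "'a::real_normed_vector itself \<Rightarrow> bool" where
  "daugavet _ \<longleftrightarrow>
     (\<forall>\<epsilon>>0. \<forall>x::'a. norm x = 1 \<longrightarrow>
        (\<forall>(f::'a \<Rightarrow> real) \<alpha>. bounded_linear f \<and> onorm f = 1 \<and> \<alpha> > 0 \<longrightarrow>
           (\<exists>y. norm y \<le> 1 \<and> f y > 1 - \<alpha> \<and> norm (x - y) > 2 - \<epsilon>)))"

definition rat_convex_combs :: "'a::real_vector set \<Rightarrow> 'a set" where
  "rat_convex_combs A = {y. \<exists>(n::nat) (c::nat \<Rightarrow> real) (v::nat \<Rightarrow> 'a).
       (\<forall>i<n. c i \<in> \<rat> \<and> c i \<ge> 0 \<and> v i \<in> A) \<and> (\<Sum>i<n. c i) = 1 \<and>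
       y = (\<Sum>i<n. c i *\<^sub>R v i)}"

definition rat_closed_hull :: "'a::real_normed_vector set \<Rightarrow> 'a set" where
  "rat_closed_hull A = closure (rat_convex_combs A)"

end

theory Submission
  imports Defs
begin

(* Call y a good point for x and eps if norm y < norm x and norm (x - y) > 2 norm x - eps.
   If X has the Daugavet property and z lay outside the closed convex hull K of the good points
   in D, a norm-one functional f would separate z from K.  Since f z <= norm z < norm x, the
   Daugavet property for x / norm x and a slice of f yields a nonempty open set of good points on
   which f exceeds sup f(K), and by density it contains a point of D: a contradiction.
   Conversely, to meet a slice of f far from x, approximate x by x' in D and a slightly shrunk
   point of the slice by z in D, so that norm z < norm x'.  Then z lies in the closed convex hull
   of the good points for x', so some good point y has f y almost f z; rescaled into the unit
   ball, y lies in the slice at distance almost 2 from x.  Rational and real convex combinations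
   have the same closure. *)

section \<open>Sublinear functionals and the Hahn-Banach theorem\<close>

definition sublinear :: "('a::real_vector \<Rightarrow> real) \<Rightarrow> bool" where
  "sublinear q \<longleftrightarrow> (\<forall>x y. q (x + y) \<le> q x + q y) \<and> (\<forall>t x. 0 \<le> t \<longrightarrow> q (t *\<^sub>R x) = t * q x)"

lemma sublinear_add_le: "sublinear q \<Longrightarrow> q (x + y) \<le> q x + q y"
  unfolding sublinear_def by blast

lemma sublinear_scaleR: "sublinear q \<Longrightarrow> 0 \<le> t \<Longrightarrow> q (t *\<^sub>R x) = t * q x"
  unfolding sublinear_def by blast

lemma sublinear_zero: "sublinear q \<Longrightarrow> q 0 = 0"
  using sublinear_scaleR[of q 0 0] by simp

lemma sublinear_neg_le: "sublinear q \<Longrightarrow> - q (- x) \<le> q x"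
  using sublinear_add_le[of q x "- x"] sublinear_zero[of q] by simp

lemma cInf_image_mult_left:
  fixes S :: "real set"
  assumes "S \<noteq> {}" "bdd_below S" "0 \<le> t"
  shows "Inf ((*) t ` S) = t * Inf S"
  using continuous_at_Inf_mono[of "(*) t" S] assms
  by (simp add: mono_def mult_left_mono continuous_intros)

lemma cInf_le_add:
  fixes S :: "real set"
  assumes "S1 \<noteq> {}" "S2 \<noteq> {}" "bdd_below S"
    and "\<And>a b. a \<in> S1 \<Longrightarrow> b \<in> S2 \<Longrightarrow> \<exists>c\<in>S. c \<le> a + b"
  shows "Inf S \<le> Inf S1 + Inf S2"
proof -
  have "Inf S - Inf S2 \<le> Inf S1"
  proof (rule cInf_greatest[OF assms(1)])
    fix a assume a: "a \<in> S1"
    have "Inf S - a \<le> Inf S2"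
    proof (rule cInf_greatest[OF assms(2)])
      fix b assume "b \<in> S2"
      then obtain c where "c \<in> S" "c \<le> a + b" using assms(4) a by blast
      then show "Inf S - a \<le> b" using cInf_lower[OF _ assms(3)] by fastforce
    qed
    then show "Inf S - Inf S2 \<le> a" by simp
  qed
  then show ?thesis by simp
qed

(* The largest sublinear functional below q whose value at -a is at most -q a.  A minimal
   sublinear functional equals all its shifts, which makes it odd and hence linear. *)
definition sublinear_shift :: "('a::real_vector \<Rightarrow> real) \<Rightarrow> 'a \<Rightarrow> 'a \<Rightarrow> real" where
  "sublinear_shift q a v = Inf ((\<lambda>t. q (v + t *\<^sub>R a) - t * q a) ` {0..})"

context
  fixes q :: "'a::real_vector \<Rightarrow> real" and a :: 'a
  assumes q: "sublinear q"
begin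

private lemma shift_bdd_below: "bdd_below ((\<lambda>t. q (v + t *\<^sub>R a) - t * q a) ` {0..})"
proof (rule bdd_belowI2)
  fix t :: real assume "t \<in> {0..}"
  then have "q (t *\<^sub>R a) = t * q a" using sublinear_scaleR[OF q] by simp
  moreover have "q ((v + t *\<^sub>R a) + - v) \<le> q (v + t *\<^sub>R a) + q (- v)"
    by (rule sublinear_add_le[OF q])
  ultimately show "- q (- v) \<le> q (v + t *\<^sub>R a) - t * q a" by simp
qed

private lemma shift_le: "t \<ge> 0 \<Longrightarrow> sublinear_shift q a v \<le> q (v + t *\<^sub>R a) - t * q a"
  unfolding sublinear_shift_def by (rule cInf_lower[OF _ shift_bdd_below]) auto

lemma sublinear_shift_le: "sublinear_shift q a v \<le> q v"
  using shift_le[of 0] by simp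

lemma sublinear_shift_neg: "sublinear_shift q a (- a) \<le> - q a"
  using shift_le[of 1 "- a"] sublinear_zero[OF q] by simp

lemma sublinear_shift_add_le:
  "sublinear_shift q a (x + y) \<le> sublinear_shift q a x + sublinear_shift q a y"
  unfolding sublinear_shift_def
proof (rule cInf_le_add[OF _ _ shift_bdd_below])
  fix r1 r2 assume "r1 \<in> (\<lambda>t. q (x + t *\<^sub>R a) - t * q a) ` {0..}"
    and "r2 \<in> (\<lambda>t. q (y + t *\<^sub>R a) - t * q a) ` {0..}"
  then obtain s t :: real where st: "0 \<le> s" "0 \<le> t"
    and r: "r1 = q (x + s *\<^sub>R a) - s * q a" "r2 = q (y + t *\<^sub>R a) - t * q a"
    by auto
  have "q (x + y + (s + t) *\<^sub>R a) \<le> q (x + s *\<^sub>R a) + q (y + t *\<^sub>R a)"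
    using sublinear_add_le[OF q, of "x + s *\<^sub>R a" "y + t *\<^sub>R a"] by (simp add: algebra_simps)
  moreover have "q (x + y + (s + t) *\<^sub>R a) - (s + t) * q a
      \<in> (\<lambda>t. q (x + y + t *\<^sub>R a) - t * q a) ` {0..}"
    using st by (intro rev_image_eqI[of "s + t"]) auto
  ultimately show "\<exists>c\<in>(\<lambda>t. q (x + y + t *\<^sub>R a) - t * q a) ` {0..}. c \<le> r1 + r2"
    using r by (intro bexI) (auto simp: algebra_simps)
qed auto

lemma sublinear_shift_scaleR:
  assumes t: "0 \<le> t"
  shows "sublinear_shift q a (t *\<^sub>R x) = t * sublinear_shift q a x"
proof (cases "t = 0")
  case True
  have "sublinear_shift q a 0 \<ge> 0"
    using shift_bdd_below unfolding sublinear_shift_def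
    by (intro cInf_greatest) (auto simp: sublinear_scaleR[OF q])
  then show ?thesis using True shift_le[of 0 0] sublinear_zero[OF q] by simp
next
  case False
  have "q (t *\<^sub>R x + u *\<^sub>R a) - u * q a = t * (q (x + (u / t) *\<^sub>R a) - (u / t) * q a)" for u
    using sublinear_scaleR[OF q t, of "x + (u / t) *\<^sub>R a"] False
    by (simp add: algebra_simps)
  then have "(\<lambda>u. q (t *\<^sub>R x + u *\<^sub>R a) - u * q a) ` {0..}
      = (*) t ` (\<lambda>u. q (x + u *\<^sub>R a) - u * q a) ` ((\<lambda>u. u / t) ` {0..})"
    by (simp add: image_image)
  also have "(\<lambda>u. u / t) ` {0..} = {0..}"
    using False t by (auto simp: image_iff intro!: bexI[of _ "_ * t"])
  finally show ?thesis
    unfolding sublinear_shift_def using cInf_image_mult_left[OF _ shift_bdd_below t] by simp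
qed

lemma sublinear_sublinear_shift: "sublinear (sublinear_shift q a)"
  unfolding sublinear_def using sublinear_shift_add_le sublinear_shift_scaleR by blast

end

lemma linear_if_minimal_sublinear:
  assumes m: "sublinear m" and minimal: "\<And>q. sublinear q \<Longrightarrow> q \<le> m \<Longrightarrow> q = m"
  shows "linear m"
proof -
  have odd: "m (- a) = - m a" for a
  proof -
    have "sublinear_shift m a = m"
      using minimal sublinear_sublinear_shift[OF m] sublinear_shift_le[OF m]
      by (simp add: le_fun_def)
    then have "m (- a) \<le> - m a" using sublinear_shift_neg[OF m, of a] by simp
    with sublinear_neg_le[OF m, of a] show ?thesis by linarith
  qed
  show ?thesis
  proof (rule linearI)
    fix x y
    show "m (x + y) = m x + m y"
      using sublinear_add_le[OF m, of x y] sublinear_add_le[OF m, of "- x" "- y"]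
        odd[of "x + y"] odd[of x] odd[of y]
      by (simp add: add.commute)
  next
    fix c x
    show "m (c *\<^sub>R x) = c *\<^sub>R m x"
    proof (cases "0 \<le> c")
      case True
      then show ?thesis by (simp add: sublinear_scaleR[OF m])
    next
      case False
      then have "m ((- c) *\<^sub>R (- x)) = (- c) * m (- x)" by (intro sublinear_scaleR[OF m]) simp
      then show ?thesis using odd[of x] by simp
    qed
  qed
qed

lemma bdd_below_sublinear_below:
  assumes "\<And>q. q \<in> C \<Longrightarrow> sublinear q \<and> q \<le> p"
  shows "bdd_below ((\<lambda>q. q x) ` C)"
proof (rule bdd_belowI2)
  fix q assume "q \<in> C"
  then have "sublinear q" "q (- x) \<le> p (- x)" using assms by (auto simp: le_fun_def)
  then show "- p (- x) \<le> q x" using sublinear_neg_le[of q x] by linarith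
qed

lemma sublinear_INF_chain:
  assumes "C \<noteq> {}" and below: "\<And>q. q \<in> C \<Longrightarrow> sublinear q \<and> q \<le> p"
    and chain: "\<And>q q'. q \<in> C \<Longrightarrow> q' \<in> C \<Longrightarrow> q \<le> q' \<or> q' \<le> q"
  shows "sublinear (\<lambda>x. INF q\<in>C. q x)"
  unfolding sublinear_def
proof (intro conjI allI impI)
  fix x y
  show "(INF q\<in>C. q (x + y)) \<le> (INF q\<in>C. q x) + (INF q\<in>C. q y)"
  proof (rule cInf_le_add[OF _ _ bdd_below_sublinear_below[OF below]])
    fix r1 r2 assume "r1 \<in> (\<lambda>q. q x) ` C" "r2 \<in> (\<lambda>q. q y) ` C"
    then obtain q1 q2 where q: "q1 \<in> C" "q2 \<in> C" "r1 = q1 x" "r2 = q2 y" by auto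
    obtain q where "q \<in> C" "q \<le> q1" "q \<le> q2"
      using chain[OF q(1,2)] q(1,2) by blast
    moreover from this have "q (x + y) \<le> q x + q y" "q x \<le> r1" "q y \<le> r2"
      using below[THEN conjunct1, THEN sublinear_add_le] q by (auto simp: le_fun_def)
    ultimately show "\<exists>c\<in>(\<lambda>q. q (x + y)) ` C. c \<le> r1 + r2"
      by (intro bexI[of _ "q (x + y)"]) auto
  qed (use assms in auto)
next
  fix t :: real and x assume t: "0 \<le> t"
  have "(\<lambda>q. q (t *\<^sub>R x)) ` C = (*) t ` (\<lambda>q. q x) ` C"
    using below sublinear_scaleR[OF _ t] by (force simp: image_image)
  then show "(INF q\<in>C. q (t *\<^sub>R x)) = t * (INF q\<in>C. q x)"
    using cInf_image_mult_left[OF _ bdd_below_sublinear_below[OF below] t] assms(1) by simp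
qed

lemma exists_minimal_sublinear_below:
  assumes "sublinear p"
  obtains m where "sublinear m" "m \<le> p" "\<And>q. sublinear q \<Longrightarrow> q \<le> m \<Longrightarrow> q = m"
proof -
  define A where "A = {q. sublinear q \<and> q \<le> p}"
  have "\<exists>m\<in>A. \<forall>q\<in>A. q \<le> m \<longrightarrow> q = m"
  proof (rule predicate_Zorn)
    show "partial_order_on A (relation_of (\<lambda>q q'. q' \<le> q) A)"
      by (rule partial_order_on_relation_ofI) auto
  next
    fix C assume C: "C \<in> Chains (relation_of (\<lambda>q q'. q' \<le> q) A)"
    have below: "\<And>q. q \<in> C \<Longrightarrow> sublinear q \<and> q \<le> p"
      using Chains_relation_of[OF C] by (auto simp: A_def)
    show "\<exists>u\<in>A. \<forall>q\<in>C. u \<le> q"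
    proof (cases "C = {}")
      case True
      then show ?thesis using assms by (auto simp: A_def)
    next
      case False
      have chain: "q \<le> q' \<or> q' \<le> q" if "q \<in> C" "q' \<in> C" for q q'
        using C that by (auto simp: Chains_def relation_of_def)
      define u where "u x = (INF q\<in>C. q x)" for x
      have u_le: "u \<le> q" if "q \<in> C" for q
        using that bdd_below_sublinear_below[OF below]
        by (auto simp: le_fun_def u_def intro: cINF_lower)
      have "sublinear u"
        unfolding u_def by (rule sublinear_INF_chain[OF False below chain])
      moreover obtain q where "q \<in> C" using False by blast
      then have "u \<le> p" using u_le below order_trans by blast
      ultimately show ?thesis using u_le by (auto simp: A_def)
    qed
  qed
  then show ?thesis using that by (auto simp: A_def)
qed

theorem Hahn_Banach_sublinear:
  assumes p: "sublinear p"
  obtains F where "linear F" "\<And>x. F x \<le> p x" "F a = p a"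
proof -
  obtain m where m: "sublinear m" "m \<le> sublinear_shift p a"
    and minimal: "\<And>q. sublinear q \<Longrightarrow> q \<le> m \<Longrightarrow> q = m"
    using exists_minimal_sublinear_below[OF sublinear_sublinear_shift[OF p]] by blast
  have lin: "linear m" by (rule linear_if_minimal_sublinear[OF m(1) minimal])
  have le: "m x \<le> p x" for x
    using m(2) sublinear_shift_le[OF p, of a x] by (auto simp: le_fun_def intro: order_trans)
  have "m (- a) \<le> - p a"
    using m(2) sublinear_shift_neg[OF p, of a] by (auto simp: le_fun_def intro: order_trans)
  then have "p a \<le> m a" using linear_neg[OF lin, of a] by simp
  with le[of a] have "m a = p a" by simp
  with lin le show ?thesis by (rule that)
qed

section \<open>Separation in normed spaces\<close>

definition minkowski_functional :: "'a::real_normed_vector set \<Rightarrow> 'a \<Rightarrow> real" where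
  "minkowski_functional U v = Inf {t. 0 < t \<and> inverse t *\<^sub>R v \<in> U}"

context
  fixes U :: "'a::real_normed_vector set" and r :: real
  assumes U: "convex U" and r: "0 < r" and ball: "ball 0 r \<subseteq> U"
begin

private lemma gauge_mem: "norm v / r < t \<Longrightarrow> t \<in> {t. 0 < t \<and> inverse t *\<^sub>R v \<in> U}"
proof -
  assume t: "norm v / r < t"
  moreover have "0 \<le> norm v / r" using r by simp
  ultimately have "0 < t" by linarith
  moreover from this have "norm (inverse t *\<^sub>R v) < r" using t r by (simp add: field_simps)
  ultimately show ?thesis using ball by auto
qed

private lemma gauge_nonempty: "{t. 0 < t \<and> inverse t *\<^sub>R v \<in> U} \<noteq> {}"
  using gauge_mem[of v "norm v / r + 1"] by auto

private lemma gauge_bdd_below: "bdd_below {t. 0 < t \<and> inverse t *\<^sub>R v \<in> U}"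
  by (rule bdd_belowI[of _ 0]) auto

lemma minkowski_functional_le_norm: "minkowski_functional U v \<le> norm v / r"
proof (rule dense_ge)
  fix t assume "norm v / r < t"
  then show "minkowski_functional U v \<le> t"
    unfolding minkowski_functional_def by (intro cInf_lower gauge_mem gauge_bdd_below)
qed

lemma minkowski_functional_le_1: "v \<in> U \<Longrightarrow> minkowski_functional U v \<le> 1"
  unfolding minkowski_functional_def by (intro cInf_lower gauge_bdd_below) auto

lemma minkowski_functional_ge_1: "v \<notin> U \<Longrightarrow> 1 \<le> minkowski_functional U v"
  unfolding minkowski_functional_def
proof (intro cInf_greatest gauge_nonempty, elim CollectE conjE)
  fix t assume v: "v \<notin> U" and t: "0 < t" "inverse t *\<^sub>R v \<in> U"
  have "0 \<in> U" using ball r by auto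
  show "1 \<le> t"
  proof (rule ccontr)
    assume "\<not> 1 \<le> t"
    then have "t *\<^sub>R (inverse t *\<^sub>R v) + (1 - t) *\<^sub>R 0 \<in> U"
      using U t \<open>0 \<in> U\<close> by (intro convexD) auto
    with v t show False by simp
  qed
qed

lemma minkowski_functional_add_le:
  "minkowski_functional U (x + y) \<le> minkowski_functional U x + minkowski_functional U y"
  unfolding minkowski_functional_def
proof (rule cInf_le_add[OF gauge_nonempty gauge_nonempty gauge_bdd_below], elim CollectE conjE)
  fix a b assume a: "0 < a" "inverse a *\<^sub>R x \<in> U" and b: "0 < b" "inverse b *\<^sub>R y \<in> U"
  have "(a / (a + b)) *\<^sub>R (inverse a *\<^sub>R x) + (b / (a + b)) *\<^sub>R (inverse b *\<^sub>R y) \<in> U"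
    using a b by (intro convexD[OF U]) (auto simp: add_divide_distrib[symmetric])
  also have "(a / (a + b)) *\<^sub>R (inverse a *\<^sub>R x) + (b / (a + b)) *\<^sub>R (inverse b *\<^sub>R y)
      = inverse (a + b) *\<^sub>R (x + y)"
    using a b by (simp add: scaleR_add_right field_simps)
  finally show "\<exists>c\<in>{t. 0 < t \<and> inverse t *\<^sub>R (x + y) \<in> U}. c \<le> a + b"
    using a b by (intro bexI[of _ "a + b"]) auto
qed

lemma minkowski_functional_scaleR:
  assumes "0 \<le> t"
  shows "minkowski_functional U (t *\<^sub>R x) = t * minkowski_functional U x"
proof (cases "t = 0")
  case True
  have "{s. 0 < s \<and> inverse s *\<^sub>R (t *\<^sub>R x) \<in> U} = {0<..}"
    using True ball r by auto
  then show ?thesis using True by (simp add: minkowski_functional_def)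
next
  case False
  then have t: "0 < t" using assms by simp
  have "{s. 0 < s \<and> inverse s *\<^sub>R (t *\<^sub>R x) \<in> U}
      = (*) t ` {s. 0 < s \<and> inverse s *\<^sub>R x \<in> U}"
  proof (intro set_eqI iffI)
    fix s assume "s \<in> {s. 0 < s \<and> inverse s *\<^sub>R (t *\<^sub>R x) \<in> U}"
    then have "s / t \<in> {s. 0 < s \<and> inverse s *\<^sub>R x \<in> U}" using t by (simp add: field_simps)
    then show "s \<in> (*) t ` {s. 0 < s \<and> inverse s *\<^sub>R x \<in> U}"
      by (rule rev_image_eqI) (use t in simp)
  next
    fix s assume "s \<in> (*) t ` {s. 0 < s \<and> inverse s *\<^sub>R x \<in> U}"
    then show "s \<in> {s. 0 < s \<and> inverse s *\<^sub>R (t *\<^sub>R x) \<in> U}" using t by (auto simp: field_simps)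
  qed
  then show ?thesis
    unfolding minkowski_functional_def
    using cInf_image_mult_left[OF gauge_nonempty gauge_bdd_below assms] by simp
qed

lemma sublinear_minkowski_functional: "sublinear (minkowski_functional U)"
  unfolding sublinear_def using minkowski_functional_add_le minkowski_functional_scaleR by blast

end

lemma separating_functional_convex_nbhd:
  fixes U :: "'a::real_normed_vector set"
  assumes U: "convex U" and r: "0 < r" and ball: "ball 0 r \<subseteq> U" and z: "z \<notin> U"
  obtains F :: "'a \<Rightarrow> real" where "bounded_linear F" "\<And>u. u \<in> U \<Longrightarrow> F u \<le> 1" "1 \<le> F z"
proof -
  let ?p = "minkowski_functional U"
  obtain F where F: "linear F" "\<And>x. F x \<le> ?p x" "F z = ?p z"
    using Hahn_Banach_sublinear[OF sublinear_minkowski_functional[OF U r ball]] by blast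
  have "\<bar>F x\<bar> \<le> norm x * (1 / r)" for x
    using F(2)[of x] F(2)[of "- x"] linear_neg[OF F(1), of x]
      minkowski_functional_le_norm[OF U r ball, of x]
      minkowski_functional_le_norm[OF U r ball, of "- x"]
    by simp
  then have "bounded_linear F"
    using F(1)
    by (intro bounded_linear_intro[where K = "1 / r"]) (auto simp: linear_add linear_scale)
  moreover have "F u \<le> 1" if "u \<in> U" for u
    using F(2)[of u] minkowski_functional_le_1[OF U r ball that] by simp
  moreover have "1 \<le> F z"
    using F(3) minkowski_functional_ge_1[OF U r ball z] by simp
  ultimately show ?thesis by (rule that)
qed

lemma strictly_separating_closed_point:
  fixes K :: "'a::real_normed_vector set"
  assumes "closed K" "convex K" "K \<noteq> {}" "z \<notin> K"
  obtains F :: "'a \<Rightarrow> real" and \<delta>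
  where "bounded_linear F" "0 < \<delta>" "\<And>k. k \<in> K \<Longrightarrow> F k \<le> F z - \<delta>"
proof -
  obtain k0 where k0: "k0 \<in> K" using assms(3) by blast
  obtain r where r: "0 < r" "ball z r \<subseteq> - K"
    using assms(1,4) open_contains_ball[of "- K"] by blast
  define U where "U = (\<Union>k\<in>K. \<Union>w\<in>ball (- k0) r. {k + w})"
  have "convex U" unfolding U_def by (intro convex_sums assms(2) convex_ball)
  moreover have "ball 0 r \<subseteq> U"
  proof
    fix v :: 'a assume "v \<in> ball 0 r"
    then have "v - k0 \<in> ball (- k0) r" by (simp add: dist_norm)
    with k0 show "v \<in> U" unfolding U_def by (intro UN_I[of k0] UN_I[of "v - k0"]) auto
  qed
  moreover have "z - k0 \<notin> U"
  proof
    assume "z - k0 \<in> U"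
    then obtain k w where "k \<in> K" "w \<in> ball (- k0) r" "z - k0 = k + w" unfolding U_def by blast
    then have "k \<in> ball z r" by (simp add: dist_norm algebra_simps norm_minus_commute)
    with r(2) \<open>k \<in> K\<close> show False by blast
  qed
  ultimately obtain F :: "'a \<Rightarrow> real" where F: "bounded_linear F" "\<And>u. u \<in> U \<Longrightarrow> F u \<le> 1"
    and Fz: "1 \<le> F (z - k0)"
    using separating_functional_convex_nbhd r(1) by blast
  interpret F: bounded_linear F by (fact F(1))
  have "z \<noteq> k0" using k0 assms(4) by blast
  define \<delta> where "\<delta> = r / 2 / norm (z - k0)"
  have \<delta>: "0 < \<delta>" unfolding \<delta>_def using r(1) \<open>z \<noteq> k0\<close> by simp
  have "F k \<le> F z - \<delta>" if "k \<in> K" for k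
  proof -
    have "norm (\<delta> *\<^sub>R (z - k0)) < r" unfolding \<delta>_def using r(1) \<open>z \<noteq> k0\<close> by simp
    then have "k + (\<delta> *\<^sub>R (z - k0) - k0) \<in> U"
      unfolding U_def using that
      by (intro UN_I[of k] UN_I[of "\<delta> *\<^sub>R (z - k0) - k0"]) (auto simp: dist_norm)
    then have "F (k + (\<delta> *\<^sub>R (z - k0) - k0)) \<le> 1" by (rule F(2))
    moreover have "F (k + (\<delta> *\<^sub>R (z - k0) - k0)) = F k + \<delta> * F (z - k0) - F k0"
      by (simp add: F.add F.diff F.scale)
    moreover have "\<delta> \<le> \<delta> * F (z - k0)" using Fz \<delta> by simp
    ultimately show ?thesis using Fz by (simp add: F.diff)
  qed
  with F(1) \<delta> show ?thesis by (rule that)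
qed

lemma separating_functional_closed_point:
  fixes K :: "'a::real_normed_vector set"
  assumes "closed K" "convex K" "K \<noteq> {}" "z \<notin> K"
  obtains f :: "'a \<Rightarrow> real" and \<beta>
  where "bounded_linear f" "onorm f = 1" "\<beta> < f z" "\<And>k. k \<in> K \<Longrightarrow> f k \<le> \<beta>"
proof -
  obtain F :: "'a \<Rightarrow> real" and \<delta> where F: "bounded_linear F" and \<delta>: "0 < \<delta>"
    and FK: "\<And>k. k \<in> K \<Longrightarrow> F k \<le> F z - \<delta>"
    using strictly_separating_closed_point[OF assms] by blast
  obtain k where "k \<in> K" using assms(3) by blast
  then have "F k \<noteq> F z" using FK \<delta> by force
  then have "0 < onorm F" using onorm_pos_lt[OF F] by metis
  define f where "f x = inverse (onorm F) * F x" for x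
  have "bounded_linear f"
    unfolding f_def by (rule bounded_linear_const_mult[OF F])
  moreover have "onorm f = 1"
    using onorm_scaleR[OF F, of "inverse (onorm F)"] \<open>0 < onorm F\<close> by (simp add: f_def[abs_def])
  moreover have "inverse (onorm F) * (F z - \<delta>) < f z"
    using \<delta> \<open>0 < onorm F\<close> by (simp add: f_def)
  moreover have "f k \<le> inverse (onorm F) * (F z - \<delta>)" if "k \<in> K" for k
    using FK[OF that] \<open>0 < onorm F\<close> by (simp add: f_def)
  ultimately show ?thesis by (rule that)
qed

section \<open>Rational closed convex hulls\<close>

lemma sum_lessThan_add_nat: "(\<Sum>i<n + m. g i) = (\<Sum>i<n. g i) + (\<Sum>i<m. g (n + i))"
  for g :: "nat \<Rightarrow> 'b::comm_monoid_add"
  by (induction m) (auto simp: add.assoc)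

lemma rat_convex_combsE:
  assumes "u \<in> rat_convex_combs A"
  obtains n :: nat and c :: "nat \<Rightarrow> real" and v
  where "\<And>i. i < n \<Longrightarrow> c i \<in> \<rat> \<and> 0 \<le> c i \<and> v i \<in> A"
    "(\<Sum>i<n. c i) = 1" "u = (\<Sum>i<n. c i *\<^sub>R v i)"
  using assms unfolding rat_convex_combs_def by (auto intro: that)

lemma mem_rat_convex_combs: "a \<in> A \<Longrightarrow> a \<in> rat_convex_combs A"
  unfolding rat_convex_combs_def
  by (intro CollectI exI[of _ "1::nat"] exI[of _ "\<lambda>_. 1::real"] exI[of _ "\<lambda>_. a"]) auto

lemma rat_convex_combs_subset_convex_hull: "rat_convex_combs A \<subseteq> convex hull A"
proof
  fix u assume "u \<in> rat_convex_combs A"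
  then obtain n and c :: "nat \<Rightarrow> real" and v
    where "\<And>i. i < n \<Longrightarrow> c i \<in> \<rat> \<and> 0 \<le> c i \<and> v i \<in> A"
    "(\<Sum>i<n. c i) = 1" "u = (\<Sum>i<n. c i *\<^sub>R v i)"
    by (elim rat_convex_combsE) blast
  then show "u \<in> convex hull A"
    using convex_sum[of "{..<n}" "convex hull A" c v] by (simp add: hull_inc)
qed

lemma rat_convex_combs_convex_comb:
  assumes u: "u \<in> rat_convex_combs A" and w: "w \<in> rat_convex_combs A"
    and \<mu>: "\<mu> \<in> \<rat>" "0 \<le> \<mu>" "\<mu> \<le> 1"
  shows "\<mu> *\<^sub>R u + (1 - \<mu>) *\<^sub>R w \<in> rat_convex_combs A"
proof -
  obtain n and c :: "nat \<Rightarrow> real" and v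
    where cv: "\<And>i. i < n \<Longrightarrow> c i \<in> \<rat> \<and> 0 \<le> c i \<and> v i \<in> A"
    "(\<Sum>i<n. c i) = 1" "u = (\<Sum>i<n. c i *\<^sub>R v i)"
    using u by (elim rat_convex_combsE) blast
  obtain m and d :: "nat \<Rightarrow> real" and y
    where dy: "\<And>i. i < m \<Longrightarrow> d i \<in> \<rat> \<and> 0 \<le> d i \<and> y i \<in> A"
    "(\<Sum>i<m. d i) = 1" "w = (\<Sum>i<m. d i *\<^sub>R y i)"
    using w by (elim rat_convex_combsE) blast
  define C where "C i = (if i < n then \<mu> * c i else (1 - \<mu>) * d (i - n))" for i
  define V where "V i = (if i < n then v i else y (i - n))" for i
  have sum_C: "(\<Sum>i<n + m. C i) = 1"
    unfolding sum_lessThan_add_nat C_def using cv(2) dy(2) by (simp flip: sum_distrib_left)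
  have sum_CV: "\<mu> *\<^sub>R u + (1 - \<mu>) *\<^sub>R w = (\<Sum>i<n + m. C i *\<^sub>R V i)"
    unfolding sum_lessThan_add_nat C_def V_def cv(3) dy(3) by (simp add: scaleR_sum_right)
  have CV: "C i \<in> \<rat> \<and> 0 \<le> C i \<and> V i \<in> A" if "i < n + m" for i
  proof (cases "i < n")
    case True
    then show ?thesis using cv(1)[of i] \<mu> by (simp add: C_def V_def)
  next
    case False
    then have "i - n < m" using that by simp
    then show ?thesis using False dy(1)[of "i - n"] \<mu> by (simp add: C_def V_def)
  qed
  show ?thesis
    unfolding rat_convex_combs_def
    using sum_C sum_CV CV by (intro CollectI exI[of _ "n + m"] exI[of _ C] exI[of _ V]) simp
qed

lemma convex_rat_closed_hull: "convex (rat_closed_hull A)"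
proof -
  define R where "R = rat_convex_combs A"
  define g :: "real \<times> 'a \<times> 'a \<Rightarrow> 'a"
    where "g p = fst p *\<^sub>R fst (snd p) + (1 - fst p) *\<^sub>R snd (snd p)" for p
  have cont: "continuous_on UNIV g" unfolding g_def by (intro continuous_intros)
  have unit_rats: "closure ({0..1} \<inter> \<rat>) = {0..1::real}"
    using closure_convex_Int_superset[of "{0..1::real}" \<rat>] by (simp add: Rats_closure_real)
  have "g ` (({0..1} \<inter> \<rat>) \<times> R \<times> R) \<subseteq> closure R"
  proof (clarsimp simp: g_def)
    fix \<mu> :: real and u w assume "0 \<le> \<mu>" "\<mu> \<le> 1" "\<mu> \<in> \<rat>" "u \<in> R" "w \<in> R"
    then have "\<mu> *\<^sub>R u + (1 - \<mu>) *\<^sub>R w \<in> R"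
      unfolding R_def by (intro rat_convex_combs_convex_comb)
    then show "\<mu> *\<^sub>R u + (1 - \<mu>) *\<^sub>R w \<in> closure R" using closure_subset by blast
  qed
  then have "g ` closure (({0..1} \<inter> \<rat>) \<times> R \<times> R) \<subseteq> closure R"
    by (intro image_closure_subset continuous_on_subset[OF cont subset_UNIV] closed_closure)
  then have g_closure: "g ` ({0..1} \<times> closure R \<times> closure R) \<subseteq> closure R"
    unfolding closure_Times unit_rats .
  show ?thesis
    unfolding rat_closed_hull_def R_def[symmetric]
  proof (rule convexI)
    fix u w and s t :: real
    assume "u \<in> closure R" "w \<in> closure R" "0 \<le> s" "0 \<le> t" "s + t = 1"
    then have "g (s, u, w) \<in> closure R" using g_closure by auto
    moreover have "t = 1 - s" using \<open>s + t = 1\<close> by simp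
    ultimately show "s *\<^sub>R u + t *\<^sub>R w \<in> closure R" by (simp add: g_def)
  qed
qed

lemma rat_closed_hull_eq_closure_convex_hull: "rat_closed_hull A = closure (convex hull A)"
proof
  show "rat_closed_hull A \<subseteq> closure (convex hull A)"
    unfolding rat_closed_hull_def by (intro closure_mono rat_convex_combs_subset_convex_hull)
  have "convex hull A \<subseteq> rat_closed_hull A"
    using mem_rat_convex_combs closure_subset
    by (intro hull_minimal convex_rat_closed_hull) (fastforce simp: rat_closed_hull_def)
  then show "closure (convex hull A) \<subseteq> rat_closed_hull A"
    by (intro closure_minimal) (simp_all add: rat_closed_hull_def)
qed

lemma closure_convex_hull_exists_gt:
  assumes f: "bounded_linear f" and x: "x \<in> closure (convex hull A)" and b: "b < f x"
  obtains y where "y \<in> A" "(b :: real) < f y"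
proof -
  have "closure (convex hull A) \<subseteq> {x. f x \<le> b}" if "\<forall>y\<in>A. f y \<le> b"
  proof (intro closure_minimal hull_minimal)
    show "A \<subseteq> {x. f x \<le> b}" using that by blast
    show "convex {x. f x \<le> b}"
      using convex_linear_vimage[OF bounded_linear.linear[OF f], of "{..b}"]
      by (simp add: vimage_def)
    show "closed {x. f x \<le> b}"
      using f by (intro closed_Collect_le continuous_intros) (auto intro: linear_continuous_on)
  qed
  with x b have "\<not> (\<forall>y\<in>A. f y \<le> b)" by force
  then show ?thesis using that by (auto simp: not_le)
qed

section \<open>The Daugavet property\<close>

lemma exists_norm_1_gt_of_less_onorm:
  fixes f :: "'a::real_normed_vector \<Rightarrow> real"
  assumes f: "bounded_linear f" and b: "0 \<le> b" "b < onorm f"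
  obtains u where "norm u = 1" "b < f u"
proof -
  interpret f: bounded_linear f by (fact f)
  have "\<exists>u. norm u = 1 \<and> b < f u"
  proof (rule ccontr)
    assume "\<nexists>u. norm u = 1 \<and> b < f u"
    then have le: "f u \<le> b" if "norm u = 1" for u using that by (meson not_le)
    have "norm (f v) \<le> b * norm v" for v
    proof (cases "v = 0")
      case False
      define u where "u = v /\<^sub>R norm v"
      have "norm u = 1" "norm (- u) = 1" using False by (simp_all add: u_def)
      then have "\<bar>f u\<bar> \<le> b" using le[of u] le[of "- u"] by (simp add: f.neg)
      moreover have "f v = norm v * f u" using False by (simp add: u_def f.scale)
      moreover have "norm v * \<bar>f u\<bar> \<le> norm v * b"
        by (rule mult_left_mono) (simp_all add: calculation)
      ultimately show ?thesis by (simp add: abs_mult mult.commute)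
    qed simp
    then have "onorm f \<le> b" by (intro onorm_bound b(1))
    with b(2) show False by simp
  qed
  then show ?thesis using that by blast
qed

lemma daugavet_scaled:
  fixes x :: "'a::real_normed_vector"
  assumes daugavet: "daugavet TYPE('a)" and "x \<noteq> 0" and f: "bounded_linear f" "onorm f = 1"
    and \<beta>: "\<beta> < norm x" and \<epsilon>: "0 < \<epsilon>"
  obtains y where "norm y < norm x" "\<beta> < f y" "2 * norm x - \<epsilon> < norm (x - y)"
proof -
  define m where "m = norm x"
  have m: "0 < m" using \<open>x \<noteq> 0\<close> by (simp add: m_def)
  interpret f: bounded_linear f by (fact f(1))
  have "norm (x /\<^sub>R m) = 1" using m by (simp add: m_def)
  moreover have "0 < (m - \<beta>) / (2 * m)" "0 < \<epsilon> / (2 * m)" using m \<beta> \<epsilon> by (simp_all add: m_def)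
  ultimately obtain y1 where y1: "norm y1 \<le> 1" "1 - (m - \<beta>) / (2 * m) < f y1"
    "2 - \<epsilon> / (2 * m) < norm (x /\<^sub>R m - y1)"
    using daugavet f unfolding daugavet_def by blast
  define \<theta> where "\<theta> = min (min \<epsilon> (m - \<beta>)) m / 2"
  have \<theta>: "0 < \<theta>" "\<theta> \<le> \<epsilon> / 2" "\<theta> \<le> (m - \<beta>) / 2" "\<theta> < m"
    using m \<beta> \<epsilon> unfolding \<theta>_def m_def by (auto simp: min_def)
  have fy1: "f y1 \<le> 1" using onorm[OF f(1), of y1] f(2) y1(1) by simp
  show ?thesis
  proof (rule that[of "(m - \<theta>) *\<^sub>R y1", folded m_def])
    have "norm ((m - \<theta>) *\<^sub>R y1) = (m - \<theta>) * norm y1" using \<theta>(4) by simp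
    also have "\<dots> \<le> m - \<theta>" using y1(1) \<theta>(4) by (simp add: mult_left_le)
    finally show "norm ((m - \<theta>) *\<^sub>R y1) < m" using \<theta>(1) by linarith
    have "m * (1 - (m - \<beta>) / (2 * m)) = (m + \<beta>) / 2" using m by (simp add: field_simps)
    then have "(m + \<beta>) / 2 < m * f y1" using y1(2) m by (metis mult_strict_left_mono)
    moreover have "\<theta> * f y1 \<le> \<theta>" using fy1 \<theta>(1) by simp
    moreover have "f ((m - \<theta>) *\<^sub>R y1) = m * f y1 - \<theta> * f y1"
      by (simp add: f.scale left_diff_distrib)
    ultimately show "\<beta> < f ((m - \<theta>) *\<^sub>R y1)" using \<theta>(3) by argo
    have "m *\<^sub>R (x /\<^sub>R m - y1) = x - (m - \<theta>) *\<^sub>R y1 - \<theta> *\<^sub>R y1"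
      using m by (simp add: algebra_simps)
    then have scaled: "m * norm (x /\<^sub>R m - y1) = norm (x - (m - \<theta>) *\<^sub>R y1 - \<theta> *\<^sub>R y1)"
      using m by (metis abs_of_pos norm_scaleR)
    have \<theta>y1: "norm (\<theta> *\<^sub>R y1) \<le> \<theta>" using y1(1) \<theta>(1) by simp
    have "m * (2 - \<epsilon> / (2 * m)) = 2 * m - \<epsilon> / 2" using m by (simp add: field_simps)
    then have "2 * m - \<epsilon> / 2 < m * norm (x /\<^sub>R m - y1)"
      using y1(3) m by (metis mult_strict_left_mono)
    also note scaled
    also have "norm (x - (m - \<theta>) *\<^sub>R y1 - \<theta> *\<^sub>R y1) \<le> norm (x - (m - \<theta>) *\<^sub>R y1) + \<theta>"
      using norm_triangle_ineq4[of "x - (m - \<theta>) *\<^sub>R y1" "\<theta> *\<^sub>R y1"] \<theta>y1 by linarith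
    finally show "2 * m - \<epsilon> < norm (x - (m - \<theta>) *\<^sub>R y1)" using \<theta> by linarith
  qed
qed

lemma daugavet_imp_mem_closure_convex_hull:
  fixes D :: "'a::real_normed_vector set"
  assumes dense: "closure D = UNIV" and daugavet: "daugavet TYPE('a)"
    and \<epsilon>: "0 < \<epsilon>" and zx: "norm z < norm x"
  shows "z \<in> closure (convex hull {y \<in> ball 0 (norm x) \<inter> D. 2 * norm x - \<epsilon> < norm (x - y)})"
    (is "z \<in> closure (convex hull ?A)")
proof (rule ccontr)
  let ?K = "closure (convex hull ?A)"
  assume z: "z \<notin> ?K"
  have "x \<noteq> 0" using zx by auto
  obtain f :: "'a \<Rightarrow> real" and \<beta> where f: "bounded_linear f" "onorm f = 1"
    and \<beta>: "\<beta> < f z" "\<And>k. k \<in> ?K \<Longrightarrow> f k \<le> \<beta>"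
  proof (cases "?A = {}")
    case True
    have "z \<notin> {z + x}" using \<open>x \<noteq> 0\<close> by simp
    then obtain f :: "'a \<Rightarrow> real" where f: "bounded_linear f" "onorm f = 1"
      using separating_functional_closed_point[of "{z + x}" z] by blast
    have "?K = {}" by (simp only: True convex_hull_empty closure_empty)
    then show ?thesis by (intro that[of f "f z - 1"] f) (simp, metis empty_iff)
  next
    case False
    then have "?K \<noteq> {}" by simp
    then show ?thesis
      using separating_functional_closed_point[OF closed_closure
          convex_closure[OF convex_convex_hull] _ z] that
      by blast
  qed
  have "f z < norm x" using onorm[OF f(1), of z] f(2) zx by simp
  with \<beta>(1) have "\<beta> < norm x" by linarith
  then obtain y where y: "norm y < norm x" "\<beta> < f y" "2 * norm x - \<epsilon> < norm (x - y)"
    by (rule daugavet_scaled[OF daugavet \<open>x \<noteq> 0\<close> f _ \<epsilon>])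
  let ?S = "{y. norm y < norm x} \<inter> {y. \<beta> < f y} \<inter> {y. 2 * norm x - \<epsilon> < norm (x - y)}"
  have "open ?S"
    using f(1) by (intro open_Int open_Collect_less continuous_intros linear_continuous_on)
  moreover have "?S \<noteq> {}" using y by blast
  ultimately have "?S \<inter> D \<noteq> {}" using open_Int_closure_eq_empty[of ?S D] dense by simp
  then obtain d where d: "d \<in> ?S" "d \<in> D" by blast
  then have "d \<in> ?A" by simp
  then have "d \<in> ?K" by (meson closure_subset hull_inc subsetD)
  with \<beta>(2) d(1) show False by fastforce
qed

lemma daugavet_if_almost:
  assumes almost: "\<And>\<delta> (x :: 'a::real_normed_vector) (f :: 'a \<Rightarrow> real).
    0 < \<delta> \<Longrightarrow> \<delta> < 1 \<Longrightarrow> norm x = 1 \<Longrightarrow> bounded_linear f \<Longrightarrow> onorm f = 1 \<Longrightarrow>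
    \<exists>y. norm y \<le> 1 + \<delta> \<and> 1 - \<delta> < f y \<and> 2 - \<delta> < norm (x - y)"
  shows "daugavet TYPE('a)"
  unfolding daugavet_def
proof (intro allI impI, elim conjE)
  fix \<epsilon> \<alpha> :: real and x :: 'a and f :: "'a \<Rightarrow> real"
  assume \<epsilon>: "0 < \<epsilon>" and x: "norm x = 1" and f: "bounded_linear f" "onorm f = 1" and \<alpha>: "0 < \<alpha>"
  interpret f: bounded_linear f by (fact f(1))
  define \<delta> where "\<delta> = min (min \<epsilon> \<alpha>) 1 / 4"
  have \<delta>: "0 < \<delta>" "\<delta> < 1" "\<delta> \<le> \<epsilon> / 4" "\<delta> \<le> \<alpha> / 4"
    using \<epsilon> \<alpha> by (auto simp: \<delta>_def min_def)
  obtain y where y: "norm y \<le> 1 + \<delta>" "1 - \<delta> < f y" "2 - \<delta> < norm (x - y)"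
    using almost[OF \<delta>(1,2) x f] by blast
  define y' where "y' = y /\<^sub>R (1 + \<delta>)"
  show "\<exists>y. norm y \<le> 1 \<and> 1 - \<alpha> < f y \<and> 2 - \<epsilon> < norm (x - y)"
  proof (intro exI[of _ y'] conjI)
    have "norm y' = norm y / (1 + \<delta>)" using \<delta>(1) by (simp add: y'_def field_simps)
    then show "norm y' \<le> 1" using y(1) \<delta>(1) by (simp add: divide_le_eq)
    have "(1 - 2 * \<delta>) * (1 + \<delta>) \<le> 1 - \<delta>"
      by (simp add: algebra_simps)
    then have "1 - 2 * \<delta> < f y / (1 + \<delta>)" using y(2) \<delta>(1) by (simp add: less_divide_eq)
    moreover have "f y' = f y / (1 + \<delta>)" by (simp add: y'_def f.scale divide_inverse_commute)
    ultimately show "1 - \<alpha> < f y'" using \<delta>(1,4) by linarith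
    have "\<delta> / (1 + \<delta>) = 1 - inverse (1 + \<delta>)" using \<delta>(1) by (simp add: field_simps)
    then have "y - y' = (\<delta> / (1 + \<delta>)) *\<^sub>R y" by (simp add: y'_def scaleR_diff_left)
    then have "norm (y - y') = \<delta> * (norm y / (1 + \<delta>))" using \<delta>(1) by simp
    also have "\<dots> \<le> \<delta>" using y(1) \<delta>(1) by (simp add: mult_left_le divide_le_eq)
    finally have "norm (y - y') \<le> \<delta>" .
    then show "2 - \<epsilon> < norm (x - y')"
      using y(3) \<delta>(1,3) norm_triangle_ineq4[of "x - y'" "y - y'"] by simp
  qed
qed

lemma dense_near:
  assumes "closure D = UNIV" "0 < e"
  obtains d where "d \<in> D" "norm (d - p) < e"
  using closure_approachable[of p D] assms by (auto simp: dist_norm)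

lemma dense_in_slice_inside_ball:
  fixes D :: "'a::real_normed_vector set"
  assumes dense: "closure D = UNIV" and f: "bounded_linear f" "onorm f = 1"
    and \<eta>: "0 < \<eta>" "\<eta> < 1 / 4"
  obtains z where "z \<in> D" "norm z < 1 - \<eta>" "1 - 4 * \<eta> < f z"
proof -
  interpret f: bounded_linear f by (fact f(1))
  obtain u where u: "norm u = 1" "1 - \<eta> < f u"
    using exists_norm_1_gt_of_less_onorm[OF f(1), of "1 - \<eta>"] f(2) \<eta> by auto
  obtain z where z: "z \<in> D" "norm (z - (1 - 2 * \<eta>) *\<^sub>R u) < \<eta>"
    by (rule dense_near[OF dense \<eta>(1)])
  have "norm z < 1 - \<eta>"
    using z(2) norm_triangle_ineq2[of z "(1 - 2 * \<eta>) *\<^sub>R u"] u(1) \<eta> by simp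
  moreover have "f z = (1 - 2 * \<eta>) * f u + f (z - (1 - 2 * \<eta>) *\<^sub>R u)" by (simp add: f.diff f.scale)
  moreover have "(1 - 2 * \<eta>) * (1 - \<eta>) < (1 - 2 * \<eta>) * f u" using u(2) \<eta> by simp
  moreover have "1 - 3 * \<eta> \<le> (1 - 2 * \<eta>) * (1 - \<eta>)" by (simp add: algebra_simps)
  moreover have "\<bar>f (z - (1 - 2 * \<eta>) *\<^sub>R u)\<bar> \<le> norm (z - (1 - 2 * \<eta>) *\<^sub>R u)"
    using onorm[OF f(1)] f(2) by simp
  ultimately show ?thesis using z by (intro that[of z]) linarith+
qed

lemma daugavet_if_mem_closure_convex_hull:
  fixes D :: "'a::real_normed_vector set"
  assumes dense: "closure D = UNIV"
    and hull: "\<And>\<epsilon> x z. 0 < \<epsilon> \<Longrightarrow> x \<in> D \<Longrightarrow> z \<in> D \<Longrightarrow> norm z < norm x \<Longrightarrow>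
      z \<in> closure (convex hull {y \<in> ball 0 (norm x) \<inter> D. 2 * norm x - \<epsilon> < norm (x - y)})"
  shows "daugavet TYPE('a)"
proof (rule daugavet_if_almost)
  fix \<delta> :: real and x :: 'a and f :: "'a \<Rightarrow> real"
  assume \<delta>: "0 < \<delta>" "\<delta> < 1" and x: "norm x = 1" and f: "bounded_linear f" "onorm f = 1"
  define \<eta> where "\<eta> = \<delta> / 8"
  have \<eta>: "0 < \<eta>" "\<eta> < 1 / 4" using \<delta> by (simp_all add: \<eta>_def)
  obtain x' where x': "x' \<in> D" "norm (x' - x) < \<eta>" by (rule dense_near[OF dense \<eta>(1)])
  have "1 - \<eta> < norm x'" "norm x' < 1 + \<eta>"
    using x'(2) x norm_triangle_ineq2[of x' x] norm_triangle_ineq3[of x' x] by linarith+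
  obtain z where z: "z \<in> D" "norm z < 1 - \<eta>" "1 - 4 * \<eta> < f z"
    by (rule dense_in_slice_inside_ball[OF dense f \<eta>])
  let ?A = "{y \<in> ball 0 (norm x') \<inter> D. 2 * norm x' - \<eta> < norm (x' - y)}"
  have "z \<in> closure (convex hull ?A)"
    using hull[OF \<eta>(1) x'(1) z(1)] z(2) \<open>1 - \<eta> < norm x'\<close> by simp
  moreover have "f z - 4 * \<eta> < f z" using \<eta>(1) by simp
  ultimately obtain y where "y \<in> ?A" "f z - 4 * \<eta> < f y"
    by (rule closure_convex_hull_exists_gt[OF f(1)])
  then have y: "norm y < norm x'" "2 * norm x' - \<eta> < norm (x' - y)" "1 - 8 * \<eta> < f y"
    using z(3) by auto
  show "\<exists>y. norm y \<le> 1 + \<delta> \<and> 1 - \<delta> < f y \<and> 2 - \<delta> < norm (x - y)"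
  proof (intro exI[of _ y] conjI)
    show "norm y \<le> 1 + \<delta>" using y(1) \<open>norm x' < 1 + \<eta>\<close> \<eta> by (simp add: \<eta>_def)
    show "1 - \<delta> < f y" using y(3) by (simp add: \<eta>_def)
    have "norm (x' - y) \<le> norm (x' - x) + norm (x - y)"
      using norm_triangle_ineq[of "x' - x" "x - y"] by simp
    then show "2 - \<delta> < norm (x - y)"
      using y(2) x'(2) \<open>1 - \<eta> < norm x'\<close> \<delta>(1) by (simp add: \<eta>_def)
  qed
qed

theorem lemma5p7:
  fixes D :: "'a::banach set"
  assumes "closure D = UNIV"
  shows "daugavet TYPE('a) \<longleftrightarrow>
    (\<forall>\<epsilon>>0. \<forall>x\<in>D. \<forall>z\<in>D. norm z \<ge> norm x \<or>
       z \<in> rat_closed_hull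
              {y \<in> ((\<lambda>u. norm x *\<^sub>R u) ` ball 0 1) \<inter> D. norm (x - y) > 2 * norm x - \<epsilon>})"
proof -
  have hull_iff: "norm z \<ge> norm x \<or>
       z \<in> rat_closed_hull
              {y \<in> ((\<lambda>u. norm x *\<^sub>R u) ` ball 0 1) \<inter> D. norm (x - y) > 2 * norm x - \<epsilon>} \<longleftrightarrow>
    (norm z < norm x \<longrightarrow>
       z \<in> closure (convex hull {y \<in> ball 0 (norm x) \<inter> D. 2 * norm x - \<epsilon> < norm (x - y)}))"
    for \<epsilon> and x z :: 'a
  proof (cases "norm z < norm x")
    case True
    then have "x \<noteq> 0" by auto
    then have "(\<lambda>u. norm x *\<^sub>R u) ` ball 0 1 = ball (0 :: 'a) (norm x)"
      using ball_scale[of "norm x" 0 1] by simp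
    with True show ?thesis by (simp only: rat_closed_hull_eq_closure_convex_hull) (simp add: not_le)
  qed simp
  show ?thesis
    unfolding hull_iff
    using daugavet_imp_mem_closure_convex_hull[OF assms]
      daugavet_if_mem_closure_convex_hull[OF assms]
    by blast
qed

end
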